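(* Let $n=p^2$ where $p$ is prime, and let $k\le\sqrt{n}$. Then the code $\mathcal{C}(r=p,p,S=\{0,1,\dots,k-1\})$ is a binary $k$-PIR code of dimension $n$ with redundancy $k\sqrt{n}$. In particular, for all $k\le\sqrt n$, $r_P(n,k)=\mathcal{O}(k\sqrt n)$.
   Context: Array construction: let $r,p$ be positive integers, $n=rp$, and $S=\{s_0<s_1<\dots<s_{k-1}\}\subseteq\{0,\dots,p-1\}$. For $s,t\in\{0,\dots,p-1\}$ let $D_{s,t}=\{(i,\langle t+is\rangle_p): i=0,\dots,r-1\}$, where $\langle x\rangle_p=x\bmod p$. An information vector $\boldsymbol{x}\in\{0,1\}^n$ is written as an array $(x_{i,j})_{(i,j)\in\{0,\dots,r-1\}\times\{0,\dots,p-1\}}$, and $kp$ redundancy bits are defined by $\rho_{\ell,t}=\sum_{(i,j)\in D_{s_\ell,t}}x_{i,j}\pmod 2$ for $\ell\in\{0,\dots,k-1\}$, $t\in\{0,\dots,p-1\}$. The binary code $\mathcal{C}(r,p,S)$ consists of all words $(\boldsymbol{x},(\rho_{\ell,t})_{\ell,t})$, of length $n+kp$. A binary $k$-PIR code of dimension $n$ and length $N$ is a binary linear code encoding $n$ information bits such that every information bit has $k$ mutually disjoint sets of coordinates from each of which it can be computed; its redundancy is $N-n$, and $r_P(n,k)$ is the minimum redundancy of a binary $k$-PIR code of dimension $n$. *)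

theory Defs
  imports Complex_Main "HOL-Computational_Algebra.Primes"
begin

text \<open>Binary vectors of length m are modelled as functions nat => bool
  that vanish (are False) outside {0..<m}; addition over GF(2) is pointwise xor.\<close>

definition binvec :: "nat \<Rightarrow> (nat \<Rightarrow> bool) set" where
  "binvec m = {x. \<forall>i. m \<le> i \<longrightarrow> \<not> x i}"

definition vadd :: "(nat \<Rightarrow> bool) \<Rightarrow> (nat \<Rightarrow> bool) \<Rightarrow> (nat \<Rightarrow> bool)" where
  "vadd x y = (\<lambda>i. x i \<noteq> y i)"

definition binary_linear_code :: "nat \<Rightarrow> nat \<Rightarrow> ((nat \<Rightarrow> bool) \<Rightarrow> (nat \<Rightarrow> bool)) \<Rightarrow> bool" where
  "binary_linear_code n N enc \<longleftrightarrow>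
     (\<forall>x \<in> binvec n. enc x \<in> binvec N) \<and>
     (\<forall>x \<in> binvec n. \<forall>y \<in> binvec n. enc (vadd x y) = vadd (enc x) (enc y)) \<and>
     inj_on enc (binvec n)"

definition recovers :: "nat \<Rightarrow> ((nat \<Rightarrow> bool) \<Rightarrow> (nat \<Rightarrow> bool)) \<Rightarrow> nat set \<Rightarrow> nat \<Rightarrow> bool" where
  "recovers n enc R i \<longleftrightarrow>
     (\<forall>x \<in> binvec n. \<forall>y \<in> binvec n. (\<forall>c \<in> R. enc x c = enc y c) \<longrightarrow> x i = y i)"

definition is_PIR_code :: "nat \<Rightarrow> nat \<Rightarrow> nat \<Rightarrow> ((nat \<Rightarrow> bool) \<Rightarrow> (nat \<Rightarrow> bool)) \<Rightarrow> bool" where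
  "is_PIR_code n N k enc \<longleftrightarrow>
     binary_linear_code n N enc \<and>
     (\<forall>i < n. \<exists>R :: nat \<Rightarrow> nat set.
        (\<forall>j < k. R j \<subseteq> {..<N} \<and> recovers n enc (R j) i) \<and>
        (\<forall>j1 < k. \<forall>j2 < k. j1 \<noteq> j2 \<longrightarrow> R j1 \<inter> R j2 = {}))"

definition r_P :: "nat \<Rightarrow> nat \<Rightarrow> nat" where
  "r_P n k = (LEAST r. \<exists>N enc. is_PIR_code n N k enc \<and> r = N - n)"

text \<open>Information bit x_{i,j} sits at coordinate i*p + j
  (0 <= i < r, 0 <= j < p); redundancy bit rho_{l,t} sits at coordinate
  r*p + l*p + t (0 <= l < |S|, 0 <= t < p); s_l is the l-th smallest element of S.\<close>

definition sel :: "nat set \<Rightarrow> nat \<Rightarrow> nat" where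
  "sel S l = sorted_list_of_set S ! l"

definition diag_set :: "nat \<Rightarrow> nat \<Rightarrow> nat \<Rightarrow> nat \<Rightarrow> (nat \<times> nat) set" where
  "diag_set r p s t = {(i, (t + i * s) mod p) | i. i < r}"

definition array_code :: "nat \<Rightarrow> nat \<Rightarrow> nat set \<Rightarrow> (nat \<Rightarrow> bool) \<Rightarrow> (nat \<Rightarrow> bool)" where
  "array_code r p S x = (\<lambda>c.
     if c < r * p then x c
     else if c < r * p + card S * p then
       (let l = (c - r * p) div p; t = (c - r * p) mod p in
        odd (card {(i, j) \<in> diag_set r p (sel S l) t. x (i * p + j)}))
     else False)"

end

theory Submission
  imports Defs
begin

text \<open>An information bit \<open>x\<^sub>a\<^sub>,\<^sub>b\<close> lies on exactly one diagonal \<open>D\<^sub>s\<^sub>,\<^sub>t\<close> of each slope \<open>s\<close>, and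
  the parity bit of that diagonal together with its other information bits determines it.
  For slopes \<open>0, \<dots>, k - 1\<close> these \<open>k\<close> recovery sets are disjoint: distinct parity bits are
  used, and two diagonals of distinct slopes \<open>s\<^sub>1, s\<^sub>2 < p\<close> meet in rows \<open>i\<^sub>1, i\<^sub>2\<close> only if
  \<open>p\<close> divides \<open>(i\<^sub>1 - i\<^sub>2)(s\<^sub>1 - s\<^sub>2)\<close>, so, \<open>p\<close> being prime and the array having at most \<open>p\<close> rows,
  they share only the point \<open>(a, b)\<close> itself, which is not part of any recovery set.\<close>

lemma odd_card_filter_xor:
  assumes "finite D"
  shows "odd (card {z \<in> D. f z \<noteq> g z}) \<longleftrightarrow> (odd (card {z \<in> D. f z}) \<noteq> odd (card {z \<in> D. g z}))"
  using assms
proof (induction D rule: finite_induct)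
  case empty
  then show ?case by simp
next
  case (insert a F)
  have "card {z \<in> insert a F. P z} = (if P a then Suc (card {z \<in> F. P z}) else card {z \<in> F. P z})"
    for P
  proof -
    have "{z \<in> insert a F. P z} = (if P a then insert a {z \<in> F. P z} else {z \<in> F. P z})"
      by auto
    then show ?thesis using insert by simp
  qed
  then show ?case using insert.IH by (cases "f a"; cases "g a") simp_all
qed

lemma parity_determines_point:
  assumes "finite D" "z\<^sub>0 \<in> D" "\<forall>z \<in> D - {z\<^sub>0}. f z = g z"
    and "odd (card {z \<in> D. f z}) \<longleftrightarrow> odd (card {z \<in> D. g z})"
  shows "f z\<^sub>0 = g z\<^sub>0"
proof (rule ccontr)
  assume "f z\<^sub>0 \<noteq> g z\<^sub>0"
  with assms(2,3) have "{z \<in> D. f z \<noteq> g z} = {z\<^sub>0}" by auto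
  then show False using odd_card_filter_xor[OF assms(1), of f g] assms(4) by simp
qed

lemma diagonals_meet_once:
  fixes p i\<^sub>1 i\<^sub>2 s\<^sub>1 s\<^sub>2 t\<^sub>1 t\<^sub>2 :: nat
  assumes "prime p" "i\<^sub>1 < p" "i\<^sub>2 < p" "s\<^sub>1 < p" "s\<^sub>2 < p" "s\<^sub>1 \<noteq> s\<^sub>2"
    and "(t\<^sub>1 + i\<^sub>1 * s\<^sub>1) mod p = (t\<^sub>2 + i\<^sub>1 * s\<^sub>2) mod p"
    and "(t\<^sub>1 + i\<^sub>2 * s\<^sub>1) mod p = (t\<^sub>2 + i\<^sub>2 * s\<^sub>2) mod p"
  shows "i\<^sub>1 = i\<^sub>2"
proof (rule ccontr)
  assume "i\<^sub>1 \<noteq> i\<^sub>2"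
  have "int p dvd (int t\<^sub>1 + int i * int s\<^sub>1) - (int t\<^sub>2 + int i * int s\<^sub>2)"
    if "(t\<^sub>1 + i * s\<^sub>1) mod p = (t\<^sub>2 + i * s\<^sub>2) mod p" for i
    using that by (metis mod_eq_dvd_iff of_nat_add of_nat_mod of_nat_mult)
  from dvd_diff[OF this[OF assms(7)] this[OF assms(8)]]
  have "int p dvd (int i\<^sub>1 - int i\<^sub>2) * (int s\<^sub>1 - int s\<^sub>2)"
    by (simp add: algebra_simps)
  moreover have "prime (int p)" using assms(1) by simp
  ultimately have "int p dvd int i\<^sub>1 - int i\<^sub>2 \<or> int p dvd int s\<^sub>1 - int s\<^sub>2"
    using prime_dvd_mult_iff by blast
  moreover have "\<not> int p dvd int u - int v" if "u < p" "v < p" "u \<noteq> v" for u v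
    using dvd_imp_le_int[of "int u - int v" "int p"] that by auto
  ultimately show False using assms \<open>i\<^sub>1 \<noteq> i\<^sub>2\<close> by blast
qed

lemma array_code_info: "c < r * p \<Longrightarrow> array_code r p S x c = x c"
  by (simp add: array_code_def)

lemma array_code_beyond: "r * p + card S * p \<le> c \<Longrightarrow> \<not> array_code r p S x c"
  by (simp add: array_code_def)

lemma finite_diag_set: "finite (diag_set r p s t)"
  unfolding diag_set_def by simp

lemma array_code_parity:
  assumes "l < card S" "t < p"
  shows "array_code r p S x (r * p + l * p + t)
     \<longleftrightarrow> odd (card {(i, j) \<in> diag_set r p (sel S l) t. x (i * p + j)})"
proof -
  have "l * p + t < Suc l * p" using assms by simp
  also have "\<dots> \<le> card S * p" using assms by (intro mult_le_mono1) simp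
  finally show ?thesis using assms by (simp add: array_code_def Let_def)
qed

lemma array_code_vadd: "array_code r p S (vadd x y) = vadd (array_code r p S x) (array_code r p S y)"
proof -
  have "{(i, j) \<in> D. P i j} = {z \<in> D. case_prod P z}" for D and P :: "nat \<Rightarrow> nat \<Rightarrow> bool"
    by auto
  then have parity: "odd (card {(i, j) \<in> diag_set r p s t. x (i * p + j) \<noteq> y (i * p + j)})
      \<longleftrightarrow> (odd (card {(i, j) \<in> diag_set r p s t. x (i * p + j)})
          \<noteq> odd (card {(i, j) \<in> diag_set r p s t. y (i * p + j)}))" for s t
    using odd_card_filter_xor[OF finite_diag_set,
        where f = "\<lambda>(i, j). x (i * p + j)" and g = "\<lambda>(i, j). y (i * p + j)"]
    by (simp only:) (simp add: split_def)
  show ?thesis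
    unfolding vadd_def array_code_def Let_def by (intro ext, simp only: parity) auto
qed

lemma binary_linear_code_array_code:
  "binary_linear_code (r * p) (r * p + card S * p) (array_code r p S)"
  unfolding binary_linear_code_def
proof (intro conjI ballI)
  show "array_code r p S x \<in> binvec (r * p + card S * p)" for x
    unfolding binvec_def by (simp add: array_code_beyond)
  show "array_code r p S (vadd x y) = vadd (array_code r p S x) (array_code r p S y)" for x y
    by (rule array_code_vadd)
  show "inj_on (array_code r p S) (binvec (r * p))"
  proof (rule inj_onI, rule ext)
    fix x y c
    assume "x \<in> binvec (r * p)" "y \<in> binvec (r * p)" "array_code r p S x = array_code r p S y"
    then show "x c = y c"
      by (cases "c < r * p") (auto simp: binvec_def dest: fun_cong[of _ _ c] simp: array_code_info)
  qed
qed

definition diag_offset :: "nat \<Rightarrow> nat \<Rightarrow> nat \<Rightarrow> nat \<Rightarrow> nat" where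
  "diag_offset p a b s = (b + p - a * s mod p) mod p"

lemma diag_offset_lt: "0 < p \<Longrightarrow> diag_offset p a b s < p"
  by (simp add: diag_offset_def)

lemma diag_offset_through:
  assumes "b < p"
  shows "(diag_offset p a b s + a * s) mod p = b"
proof -
  have "a * s mod p \<le> p" using assms by (simp add: less_imp_le)
  moreover have "a * s = p * (a * s div p) + a * s mod p" by simp
  ultimately have "b + p - a * s mod p + a * s = b + p + p * (a * s div p)"
    by linarith
  then show ?thesis using assms by (simp add: diag_offset_def mod_add_left_eq)
qed

text \<open>The \<open>l\<close>-th recovery set of the bit in position \<open>a * p + b\<close>: the parity bit of the
  diagonal of slope \<open>l\<close> through \<open>(a, b)\<close> and all other information bits on it.\<close>

definition recovery_set :: "nat \<Rightarrow> nat \<Rightarrow> nat \<Rightarrow> nat \<Rightarrow> nat \<Rightarrow> nat set" where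
  "recovery_set r p a b l =
     insert (r * p + l * p + diag_offset p a b l)
       ((\<lambda>i. i * p + (diag_offset p a b l + i * l) mod p) ` ({..<r} - {a}))"

lemma row_major_lt: "(i :: nat) < r \<Longrightarrow> j < p \<Longrightarrow> i * p + j < r * p"
proof -
  assume "i < r" "j < p"
  then have "i * p + j < Suc i * p" by simp
  also have "\<dots> \<le> r * p" using \<open>i < r\<close> by (intro mult_le_mono1) simp
  finally show ?thesis .
qed

lemma recovery_set_memD:
  assumes "0 < p" "c \<in> recovery_set r p a b l"
  shows "r * p \<le> c \<and> c div p = r + l
    \<or> c < r * p \<and> c div p < r \<and> c div p \<noteq> a \<and> c mod p = (diag_offset p a b l + c div p * l) mod p"
proof -
  let ?t = "diag_offset p a b l"
  have t: "?t < p" using assms(1) by (rule diag_offset_lt)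
  from assms(2) consider "c = (r + l) * p + ?t"
    | i where "i < r" "i \<noteq> a" "c = i * p + (?t + i * l) mod p"
    unfolding recovery_set_def by (auto simp: algebra_simps)
  then show ?thesis
  proof cases
    case 1
    then have "r * p \<le> c" by (simp add: add_mult_distrib)
    moreover have "c div p = r + l" using 1 t by simp
    ultimately show ?thesis by simp
  next
    case 2
    then show ?thesis using row_major_lt[of i r "(?t + i * l) mod p" p] assms(1) by simp
  qed
qed

lemma recovery_set_subset:
  assumes "0 < p" "l < k"
  shows "recovery_set r p a b l \<subseteq> {..<r * p + k * p}"
proof
  fix c assume "c \<in> recovery_set r p a b l"
  with recovery_set_memD[OF assms(1)] have "c div p < r + k" using assms(2) by fastforce
  then have "c < (r + k) * p" using assms(1) by (simp add: div_less_iff_less_mult)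
  then show "c \<in> {..<r * p + k * p}" by (simp add: algebra_simps)
qed

lemma recovers_recovery_set:
  assumes "a < r" "b < p" "l < k"
  shows "recovers (r * p) (array_code r p {0..<k}) (recovery_set r p a b l) (a * p + b)"
  unfolding recovers_def
proof (intro ballI impI)
  fix x y
  assume agree: "\<forall>c \<in> recovery_set r p a b l. array_code r p {0..<k} x c = array_code r p {0..<k} y c"
  define t where "t = diag_offset p a b l"
  define bit where "bit u = case_prod (\<lambda>i j. u (i * p + j))" for u :: "nat \<Rightarrow> bool"
  let ?D = "diag_set r p l t"
  have sel: "sel {0..<k} l = l" using assms(3) by (simp add: sel_def)
  have "{(i, j) \<in> ?D. u (i * p + j)} = {z \<in> ?D. bit u z}" for u
    unfolding bit_def by auto
  moreover have "t < p" unfolding t_def using assms(2) by (simp add: diag_offset_lt)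
  ultimately have "odd (card {z \<in> ?D. bit x z}) \<longleftrightarrow> odd (card {z \<in> ?D. bit y z})"
    using agree array_code_parity[of l "{0..<k}" t p r] assms(3)
    unfolding recovery_set_def t_def sel by simp
  moreover have "(a, b) \<in> ?D"
    using assms diag_offset_through[of b p a l] unfolding diag_set_def t_def by (auto simp: mult.commute)
  moreover have "\<forall>z \<in> ?D - {(a, b)}. bit x z = bit y z"
  proof
    fix z assume z: "z \<in> ?D - {(a, b)}"
    then obtain i where i: "i < r" "z = (i, (t + i * l) mod p)"
      unfolding diag_set_def by auto
    with z have "i \<noteq> a"
      using diag_offset_through[OF assms(2), of a l] by (auto simp: t_def mult.commute)
    with i have "i * p + (t + i * l) mod p \<in> recovery_set r p a b l"
      unfolding recovery_set_def t_def by auto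
    moreover have "i * p + (t + i * l) mod p < r * p"
      using row_major_lt[OF i(1)] assms(2) by simp
    ultimately show "bit x z = bit y z"
      using agree i(2) array_code_info unfolding bit_def by (metis case_prod_conv)
  qed
  ultimately have "bit x (a, b) = bit y (a, b)"
    by (intro parity_determines_point[OF finite_diag_set]) auto
  then show "x (a * p + b) = y (a * p + b)" unfolding bit_def by simp
qed

lemma recovery_sets_disjoint:
  assumes "prime p" "r \<le> p" "a < r" "b < p" "l\<^sub>1 < p" "l\<^sub>2 < p" "l\<^sub>1 \<noteq> l\<^sub>2"
  shows "recovery_set r p a b l\<^sub>1 \<inter> recovery_set r p a b l\<^sub>2 = {}"
proof (rule ccontr)
  let ?t = "diag_offset p a b"
  have p: "0 < p" using assms(1) prime_gt_0_nat by blast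
  assume "recovery_set r p a b l\<^sub>1 \<inter> recovery_set r p a b l\<^sub>2 \<noteq> {}"
  then obtain c where c: "c \<in> recovery_set r p a b l\<^sub>1" "c \<in> recovery_set r p a b l\<^sub>2" by blast
  show False
  proof (cases "c < r * p")
    case True
    with recovery_set_memD[OF p c(1)] recovery_set_memD[OF p c(2)]
    have row: "c div p < r" "c div p \<noteq> a"
      and "(?t l\<^sub>1 + c div p * l\<^sub>1) mod p = (?t l\<^sub>2 + c div p * l\<^sub>2) mod p"
      by auto
    moreover have "(?t l\<^sub>1 + a * l\<^sub>1) mod p = (?t l\<^sub>2 + a * l\<^sub>2) mod p"
      using diag_offset_through[OF assms(4)] by simp
    moreover have "c div p < p" "a < p" using row(1) assms(2,3) by simp_all
    ultimately have "c div p = a"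
      using diagonals_meet_once[OF assms(1) _ _ assms(5-7)] by blast
    then show False using row(2) by contradiction
  next
    case False
    with recovery_set_memD[OF p c(1)] recovery_set_memD[OF p c(2)]
    have "c div p = r + l\<^sub>1" "c div p = r + l\<^sub>2"
      by auto
    then show False using assms(7) by simp
  qed
qed

lemma is_PIR_code_array_code:
  assumes "prime p" "r \<le> p" "k \<le> p"
  shows "is_PIR_code (r * p) (r * p + k * p) k (array_code r p {0..<k})"
  unfolding is_PIR_code_def
proof (intro conjI allI impI)
  show "binary_linear_code (r * p) (r * p + k * p) (array_code r p {0..<k})"
    using binary_linear_code_array_code[of r p "{0..<k}"] by simp
  fix c assume "c < r * p"
  have p: "0 < p" using assms(1) prime_gt_0_nat by blast
  then have b: "c mod p < p" by simp
  have a: "c div p < r" using \<open>c < r * p\<close> by (simp add: less_mult_imp_div_less)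
  let ?R = "recovery_set r p (c div p) (c mod p)"
  have "?R l \<subseteq> {..<r * p + k * p} \<and> recovers (r * p) (array_code r p {0..<k}) (?R l) c"
    if "l < k" for l
    using recovery_set_subset[OF p that] recovers_recovery_set[OF a b that] by simp
  moreover have "?R l\<^sub>1 \<inter> ?R l\<^sub>2 = {}" if "l\<^sub>1 < k" "l\<^sub>2 < k" "l\<^sub>1 \<noteq> l\<^sub>2" for l\<^sub>1 l\<^sub>2
    using recovery_sets_disjoint[OF assms(1,2) a b] that assms(3) by simp
  ultimately show "\<exists>R. (\<forall>l<k. R l \<subseteq> {..<r * p + k * p} \<and> recovers (r * p) (array_code r p {0..<k}) (R l) c)
      \<and> (\<forall>l\<^sub>1<k. \<forall>l\<^sub>2<k. l\<^sub>1 \<noteq> l\<^sub>2 \<longrightarrow> R l\<^sub>1 \<inter> R l\<^sub>2 = {})"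
    by blast
qed

lemma r_P_le: "is_PIR_code n N k enc \<Longrightarrow> r_P n k \<le> N - n"
  unfolding r_P_def by (intro Least_le) blast

theorem theorem8:
  fixes p n k :: nat
  assumes "prime p" and "n = p ^ 2" and "real k \<le> sqrt (real n)"
  shows "is_PIR_code n (n + k * p) k (array_code p p {0..<k})
         \<and> real ((n + k * p) - n) = real k * sqrt (real n)
         \<and> real (r_P n k) \<le> real k * sqrt (real n)"
proof -
  have sqrt_n: "sqrt (real n) = real p" using assms(2) by simp
  then have "k \<le> p" using assms(3) by simp
  then have pir: "is_PIR_code n (n + k * p) k (array_code p p {0..<k})"
    using is_PIR_code_array_code[OF assms(1) order.refl] assms(2) by (simp add: power2_eq_square)
  then have "r_P n k \<le> k * p" using r_P_le by fastforce
  then have "real (r_P n k) \<le> real k * real p" by (metis of_nat_le_iff of_nat_mult)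
  with pir sqrt_n show ?thesis by simp
qed

end
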